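(* Let $q>0$, $n\ge1$, and let $(p_m)_{m\ge1}$ be the $q$-Mallows process. Then each of the following random permutations of $\{1,\dots,n\}$ is distributed as $\mu_{n,q}$: (i) $\pi(i)=p_n(n+1-i)$; (ii) $\pi(i)=n+1-p_n^{-1}(i)$; (iii) $\pi(i)=p_n^{-1}(n+1-i)$; (iv) $\pi(i)=n+1-p_n(i)$.
   Context: For $q>0$ and $n\ge1$, $\mu_{n,q}(\pi)=q^{\mathrm{inv}(\pi)}/Z_{n,q}$ on $S_n$, with $\mathrm{inv}(\pi)$ the number of pairs $i<j$ with $\pi(i)>\pi(j)$ and $Z_{n,q}$ a normalizing constant. The $q$-Mallows process is the sequence of random permutations $p_n\in S_n$ defined as follows: let $(p_n(n))_{n\ge1}$ be independent with $\mathbb{P}(p_n(n)=j)=\frac{q^{j-1}}{1+q+\dots+q^{n-1}}$ for $1\le j\le n$; $p_1$ is the unique permutation of $\{1\}$, and for $n\ge2$, $p_n$ takes the value $p_n(n)$ at $n$ and, for $1\le i\le n-1$, $p_n(i)=p_{n-1}(i)$ if $p_{n-1}(i)<p_n(n)$ and $p_n(i)=p_{n-1}(i)+1$ otherwise. *)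

theory Defs
  imports "HOL-Probability.Probability" "HOL-Combinatorics.Permutations"
begin

definition inv_count :: "nat \<Rightarrow> (nat \<Rightarrow> nat) \<Rightarrow> nat" where
  "inv_count n \<pi> = card {(i, j). 1 \<le> i \<and> i < j \<and> j \<le> n \<and> \<pi> i > \<pi> j}"

definition mallows_Z :: "nat \<Rightarrow> real \<Rightarrow> real" where
  "mallows_Z n q = (\<Sum>\<sigma> \<in> {\<sigma>. \<sigma> permutes {1..n}}. q ^ inv_count n \<sigma>)"

definition mallows_mu :: "nat \<Rightarrow> real \<Rightarrow> (nat \<Rightarrow> nat) \<Rightarrow> real" where
  "mallows_mu n q \<sigma> = q ^ inv_count n \<sigma> / mallows_Z n q"

text \<open>The q-Mallows process built from the values J k = p_k(k).
  mallows_perm J n is p_n (identity outside {1..n}); p_0 = id, and p_1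
  is forced to be the identity on {1} as J 1 = 1 almost surely.\<close>
fun mallows_perm :: "(nat \<Rightarrow> nat) \<Rightarrow> nat \<Rightarrow> (nat \<Rightarrow> nat)" where
  "mallows_perm J 0 = id"
| "mallows_perm J (Suc n) = (\<lambda>i.
     if i = Suc n then J (Suc n)
     else if 1 \<le> i \<and> i \<le> n then
       (if mallows_perm J n i < J (Suc n) then mallows_perm J n i else mallows_perm J n i + 1)
     else i)"

end

theory Submission
  imports Defs
begin

text \<open>The value \<open>J k = p\<^sub>k(k)\<close> is inserted at step \<open>k\<close> without changing the
  relative order of the earlier positions, so \<open>J k - 1\<close> is the number of \<open>i < k\<close> with
  \<open>p\<^sub>n(i) < p\<^sub>n(k)\<close>. Hence \<open>(J 1, \<dots>, J n)\<close> is a Lehmer code of \<open>p\<^sub>n\<close>, codes correspond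
  bijectively to permutations, and \<open>p\<^sub>n\<close> has \<open>\<Sum>\<^sub>k (J k - 1)\<close> non-inversions; by
  independence, \<open>P(p\<^sub>n = \<tau>) = q\<^bsup>noninv \<tau>\<^esup> / [n]\<^sub>q!\<close>. Each of the four transformations is a
  bijection of \<open>S\<^sub>n\<close> taking non-inversions to inversions, so it carries this law to
  \<open>\<mu>\<^sub>n\<^sub>,\<^sub>q\<close>; the same bijection shows \<open>Z\<^sub>n\<^sub>,\<^sub>q = [n]\<^sub>q!\<close>.\<close>

definition noninv_count :: "nat \<Rightarrow> (nat \<Rightarrow> nat) \<Rightarrow> nat" where
  "noninv_count n \<pi> = card {(i, j). 1 \<le> i \<and> i < j \<and> j \<le> n \<and> \<pi> i < \<pi> j}"

definition is_lehmer_code :: "nat \<Rightarrow> (nat \<Rightarrow> nat) \<Rightarrow> bool" where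
  "is_lehmer_code n J \<longleftrightarrow> (\<forall>k\<in>{1..n}. J k \<in> {1..k})"

abbreviation lehmer_codes :: "nat \<Rightarrow> (nat \<Rightarrow> nat) set" where
  "lehmer_codes n \<equiv> \<Pi>\<^sub>E k\<in>{1..n}. {1..k}"

definition q_factorial :: "nat \<Rightarrow> 'a :: comm_semiring_1 \<Rightarrow> 'a" where
  "q_factorial n q = (\<Prod>k\<in>{1..n}. \<Sum>i<k. q ^ i)"

section \<open>The insertion process\<close>

lemma mallows_perm_cong:
  "(\<And>k. k \<in> {1..n} \<Longrightarrow> J k = J' k) \<Longrightarrow> mallows_perm J n = mallows_perm J' n"
proof (induction n)
  case (Suc n)
  then have "mallows_perm J n = mallows_perm J' n" "J (Suc n) = J' (Suc n)" by auto
  then show ?case unfolding mallows_perm.simps by (simp only:)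
qed simp

lemma mallows_perm_outside: "i \<notin> {1..n} \<Longrightarrow> mallows_perm J n i = i"
  by (cases n) auto

lemma mallows_perm_last: "mallows_perm J (Suc n) (Suc n) = J (Suc n)"
  by simp

lemma mallows_perm_Suc_below:
  "i \<in> {1..n} \<Longrightarrow> mallows_perm J (Suc n) i =
     (if mallows_perm J n i < J (Suc n) then mallows_perm J n i else mallows_perm J n i + 1)"
  by simp

declare mallows_perm.simps(2) [simp del]

lemma mallows_perm_permutes: "is_lehmer_code n J \<Longrightarrow> mallows_perm J n permutes {1..n}"
proof (induction n)
  case 0
  then show ?case by (simp add: permutes_id[unfolded id_def])
next
  case (Suc n)
  let ?P = "mallows_perm J n" and ?Q = "mallows_perm J (Suc n)" and ?j = "J (Suc n)"
  define shift where "shift v = (if v < ?j then v else v + 1)" for v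
  have P: "?P permutes {1..n}" using Suc by (auto simp: is_lehmer_code_def)
  have j: "?j \<in> {1..Suc n}" using Suc.prems by (auto simp: is_lehmer_code_def)
  have Q_below: "?Q i = shift (?P i)" if "i \<in> {1..n}" for i
    unfolding shift_def using that by (rule mallows_perm_Suc_below)
  have "inj shift" by (auto simp: inj_on_def shift_def split: if_splits)
  then have "inj_on (shift \<circ> ?P) {1..n}"
    using permutes_inj_on[OF P] by (blast intro: comp_inj_on inj_on_subset)
  moreover have "inj_on ?Q {1..n} = inj_on (shift \<circ> ?P) {1..n}"
    by (rule inj_on_cong) (simp add: Q_below)
  \<comment> \<open>\<open>shift\<close> skips the value \<open>?j\<close>, which goes to the new position.\<close>
  moreover have "?Q (Suc n) \<notin> ?Q ` {1..n}"
    by (auto simp: Q_below mallows_perm_last shift_def)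
  moreover have "{1..Suc n} = insert (Suc n) {1..n}" "{1..n} - {Suc n} = {1..n}" by auto
  ultimately have "inj_on ?Q {1..Suc n}" by simp
  moreover have "?Q i \<in> {1..Suc n}" if "i \<in> {1..Suc n}" for i
  proof (cases "i = Suc n")
    case False
    then have "i \<in> {1..n}" using that by auto
    moreover from this have "?P i \<in> {1..n}" using permutes_in_image[OF P, of i] by simp
    ultimately show ?thesis by (auto simp: Q_below shift_def)
  qed (use j in \<open>simp add: mallows_perm_last\<close>)
  ultimately have "bij_betw ?Q {1..Suc n} {1..Suc n}"
    by (simp add: bij_betw_def endo_inj_surj image_subset_iff)
  then show ?case using mallows_perm_outside by (rule bij_imp_permutes)
qed

lemma mallows_perm_less_iff:
  assumes "m \<le> n" "i \<in> {1..m}" "k \<in> {1..m}"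
  shows "mallows_perm J n i < mallows_perm J n k \<longleftrightarrow> mallows_perm J m i < mallows_perm J m k"
  using assms(1)
proof (induction n rule: dec_induct)
  case (step n)
  have "i \<in> {1..n}" "k \<in> {1..n}" using assms step by auto
  then show ?case using step.IH by (auto simp: mallows_perm_Suc_below)
qed simp

lemma card_permutes_Collect:
  assumes "P permutes A"
  shows "card {i \<in> A. Q (P i)} = card {v \<in> A. Q v}"
proof -
  have "P ` {i \<in> A. Q (P i)} = {v \<in> A. Q v}"
  proof (intro equalityI subsetI)
    fix v assume v: "v \<in> {v \<in> A. Q v}"
    have "inv P v \<in> A" using v permutes_in_image[OF permutes_inv[OF assms]] by simp
    moreover have "P (inv P v) = v" using assms by (simp add: permutes_inverses)
    ultimately show "v \<in> P ` {i \<in> A. Q (P i)}" using v by (auto intro: rev_image_eqI)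
  qed (use assms in \<open>auto simp: permutes_in_image\<close>)
  moreover have "inj_on P {i \<in> A. Q (P i)}"
    using permutes_inj_on[OF assms] by (rule inj_on_subset) auto
  ultimately show ?thesis by (metis card_image)
qed

lemma mallows_perm_rank:
  assumes code: "is_lehmer_code n J" and k: "k \<in> {1..n}"
  shows "card {i. 1 \<le> i \<and> i < k \<and> mallows_perm J n i < mallows_perm J n k} = J k - 1"
proof -
  have code_k: "is_lehmer_code k J" using code k by (auto simp: is_lehmer_code_def)
  have last: "mallows_perm J k k = J k" using k by (cases k) (auto simp: mallows_perm_last)
  have "{i. 1 \<le> i \<and> i < k \<and> mallows_perm J n i < mallows_perm J n k}
      = {i \<in> {1..k}. mallows_perm J k i < J k}"
    using mallows_perm_less_iff[of k n _ k J] k last by (auto simp: le_less)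
  also have "card \<dots> = card {v \<in> {1..k}. v < J k}"
    by (rule card_permutes_Collect[OF mallows_perm_permutes[OF code_k]])
  also have "{v \<in> {1..k}. v < J k} = {1..<J k}"
    using bspec[OF code[unfolded is_lehmer_code_def] k] by auto
  finally show ?thesis by simp
qed

lemma card_ordered_pairs_sum:
  "card {(i, j). 1 \<le> i \<and> i < j \<and> j \<le> (n::nat) \<and> R i j} =
     (\<Sum>j\<in>{1..n}. card {i. 1 \<le> i \<and> i < j \<and> R i j})"
proof -
  let ?S = "SIGMA j:{1..n}. {i. 1 \<le> i \<and> i < j \<and> R i j}"
  have "{(i, j). 1 \<le> i \<and> i < j \<and> j \<le> n \<and> R i j} = prod.swap ` ?S"
    by (auto simp: image_iff)
  moreover have "card ?S = (\<Sum>j\<in>{1..n}. card {i. 1 \<le> i \<and> i < j \<and> R i j})"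
    by (rule card_SigmaI) auto
  ultimately show ?thesis by (simp add: card_image)
qed

lemma noninv_count_mallows_perm:
  "is_lehmer_code n J \<Longrightarrow> noninv_count n (mallows_perm J n) = (\<Sum>k\<in>{1..n}. J k - 1)"
  unfolding noninv_count_def card_ordered_pairs_sum by (intro sum.cong refl mallows_perm_rank)

lemma mallows_perm_eq_imp_code_eq:
  assumes u: "is_lehmer_code n u" and v: "is_lehmer_code n v"
    and eq: "mallows_perm u n = mallows_perm v n" and k: "k \<in> {1..n}"
  shows "u k = v k"
proof -
  have "u k - 1 = v k - 1" using mallows_perm_rank[OF u k] mallows_perm_rank[OF v k] eq by simp
  moreover have "u k \<ge> 1" "v k \<ge> 1" using u v k by (auto simp: is_lehmer_code_def)
  ultimately show ?thesis by simp
qed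

lemma lehmer_codes_is_lehmer_code: "v \<in> lehmer_codes n \<Longrightarrow> is_lehmer_code n v"
  by (auto simp: is_lehmer_code_def PiE_iff)

lemma inj_on_mallows_perm_lehmer_codes: "inj_on (\<lambda>v. mallows_perm v n) (lehmer_codes n)"
proof (rule inj_onI)
  fix u v assume u: "u \<in> lehmer_codes n" and v: "v \<in> lehmer_codes n"
    and eq: "mallows_perm u n = mallows_perm v n"
  show "u = v"
  proof (rule PiE_ext[OF u v])
    fix k assume "k \<in> {1..n}"
    then show "u k = v k"
      by (rule mallows_perm_eq_imp_code_eq
          [OF lehmer_codes_is_lehmer_code[OF u] lehmer_codes_is_lehmer_code[OF v] eq])
  qed
qed

lemma mallows_perm_lehmer_codes:
  "(\<lambda>v. mallows_perm v n) ` lehmer_codes n = {\<sigma>. \<sigma> permutes {1..n}}"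
proof (rule card_subset_eq)
  show "finite {\<sigma>. \<sigma> permutes {1..n}}" by (rule finite_permutations) simp
  show "(\<lambda>v. mallows_perm v n) ` lehmer_codes n \<subseteq> {\<sigma>. \<sigma> permutes {1..n}}"
    using mallows_perm_permutes lehmer_codes_is_lehmer_code by blast
  have "card ((\<lambda>v. mallows_perm v n) ` lehmer_codes n) = card (lehmer_codes n)"
    by (rule card_image[OF inj_on_mallows_perm_lehmer_codes])
  also have "\<dots> = fact n" by (simp add: card_PiE fact_prod)
  also have "\<dots> = card {\<sigma>. \<sigma> permutes {1..n}}" by (simp add: card_permutations)
  finally show "card ((\<lambda>v. mallows_perm v n) ` lehmer_codes n) = card {\<sigma>. \<sigma> permutes {1..n}}" .
qed

lemma sum_shift_geometric: "(\<Sum>j\<in>{1..k}. q ^ (j - 1)) = (\<Sum>i<k. q ^ i)"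
  by (rule sum.reindex_bij_witness[where i = Suc and j = "\<lambda>j. j - 1"]) auto

lemma sum_noninv_count_permutations:
  "(\<Sum>\<sigma> | \<sigma> permutes {1..n}. q ^ noninv_count n \<sigma>) = q_factorial n q"
proof -
  have "(\<Sum>\<sigma> | \<sigma> permutes {1..n}. q ^ noninv_count n \<sigma>) =
        (\<Sum>v\<in>lehmer_codes n. q ^ noninv_count n (mallows_perm v n))"
    unfolding mallows_perm_lehmer_codes[symmetric]
    by (rule sum.reindex[OF inj_on_mallows_perm_lehmer_codes, unfolded comp_def])
  also have "\<dots> = (\<Sum>v\<in>lehmer_codes n. \<Prod>k\<in>{1..n}. q ^ (v k - 1))"
    by (simp add: noninv_count_mallows_perm lehmer_codes_is_lehmer_code power_sum)
  also have "\<dots> = (\<Prod>k\<in>{1..n}. \<Sum>j\<in>{1..k}. q ^ (j - 1))"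
    by (rule prod_sum_PiE[symmetric]) auto
  also have "\<dots> = q_factorial n q" by (simp only: q_factorial_def sum_shift_geometric)
  finally show ?thesis .
qed

section \<open>Transformations exchanging non-inversions and inversions\<close>

definition perm_reverse :: "nat \<Rightarrow> (nat \<Rightarrow> nat) \<Rightarrow> nat \<Rightarrow> nat" where
  "perm_reverse n \<tau> = (\<lambda>i. if i \<in> {1..n} then \<tau> (n + 1 - i) else i)"

definition perm_complement :: "nat \<Rightarrow> (nat \<Rightarrow> nat) \<Rightarrow> nat \<Rightarrow> nat" where
  "perm_complement n \<tau> = (\<lambda>i. if i \<in> {1..n} then n + 1 - \<tau> i else i)"

definition reversal :: "nat \<Rightarrow> nat \<Rightarrow> nat" where
  "reversal n i = (if i \<in> {1..n} then n + 1 - i else i)"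

definition noninv_to_inv :: "nat \<Rightarrow> ((nat \<Rightarrow> nat) \<Rightarrow> nat \<Rightarrow> nat) \<Rightarrow> bool" where
  "noninv_to_inv n T \<longleftrightarrow> inj_on T {\<tau>. \<tau> permutes {1..n}} \<and>
     (\<forall>\<tau>. \<tau> permutes {1..n} \<longrightarrow> T \<tau> permutes {1..n} \<and> inv_count n (T \<tau>) = noninv_count n \<tau>)"

lemma reversal_reversal: "reversal n (reversal n i) = i"
  by (auto simp: reversal_def)

lemma reversal_permutes: "reversal n permutes {1..n}"
  by (intro bij_imp_permutes bij_betw_byWitness[where f' = "reversal n"])
     (auto simp: reversal_def)

lemma perm_reverse_eq: "\<tau> permutes {1..n} \<Longrightarrow> perm_reverse n \<tau> = \<tau> \<circ> reversal n"
  by (auto simp: perm_reverse_def reversal_def permutes_not_in)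

lemma perm_complement_eq:
  assumes "\<tau> permutes {1..n}"
  shows "perm_complement n \<tau> = reversal n \<circ> \<tau>"
proof
  fix i
  show "perm_complement n \<tau> i = (reversal n \<circ> \<tau>) i"
  proof (cases "i \<in> {1..n}")
    case True
    then have "\<tau> i \<in> {1..n}" using permutes_in_image[OF assms] by blast
    then show ?thesis using True by (simp add: perm_complement_def reversal_def)
  next
    case False
    then show ?thesis
      using permutes_not_in[OF assms False] by (auto simp: perm_complement_def reversal_def)
  qed
qed

lemma inv_count_perm_reverse: "inv_count n (perm_reverse n \<tau>) = noninv_count n \<tau>"
proof -
  let ?A = "{(i, j). 1 \<le> i \<and> i < j \<and> j \<le> n \<and> perm_reverse n \<tau> i > perm_reverse n \<tau> j}"
  let ?B = "{(i, j). 1 \<le> i \<and> i < j \<and> j \<le> n \<and> \<tau> i < \<tau> j}"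
  let ?f = "\<lambda>(i, j). (n + 1 - j, n + 1 - i)"
  have "bij_betw ?f ?A ?B"
  proof (rule bij_betw_byWitness[where f' = ?f])
    show "?f ` ?A \<subseteq> ?B"
    proof
      fix y assume "y \<in> ?f ` ?A"
      then obtain i j where ij: "1 \<le> i" "i < j" "j \<le> n"
          "perm_reverse n \<tau> i > perm_reverse n \<tau> j" "y = (n + 1 - j, n + 1 - i)"
        by auto
      then have "\<tau> (n + 1 - i) > \<tau> (n + 1 - j)" by (simp add: perm_reverse_def)
      then show "y \<in> ?B" using ij by auto
    qed
    show "?f ` ?B \<subseteq> ?A"
    proof
      fix y assume "y \<in> ?f ` ?B"
      then obtain i j where ij: "1 \<le> i" "i < j" "j \<le> n" "\<tau> i < \<tau> j" "y = (n + 1 - j, n + 1 - i)"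
        by auto
      then have "perm_reverse n \<tau> (n + 1 - j) = \<tau> j" "perm_reverse n \<tau> (n + 1 - i) = \<tau> i"
        by (auto simp: perm_reverse_def)
      then show "y \<in> ?A" using ij by auto
    qed
  qed auto
  then show ?thesis unfolding inv_count_def noninv_count_def by (rule bij_betw_same_card)
qed

lemma inv_count_perm_complement:
  assumes "\<tau> permutes {1..n}"
  shows "inv_count n (perm_complement n \<tau>) = noninv_count n \<tau>"
proof -
  have compl_less_iff: "perm_complement n \<tau> j < perm_complement n \<tau> i \<longleftrightarrow> \<tau> i < \<tau> j"
    if "1 \<le> i" "i < j" "j \<le> n" for i j
  proof -
    have "\<tau> i \<in> {1..n}" "\<tau> j \<in> {1..n}" using permutes_in_image[OF assms] that by auto
    then show ?thesis using that by (auto simp: perm_complement_def)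
  qed
  have "{(i, j). 1 \<le> i \<and> i < j \<and> j \<le> n \<and> perm_complement n \<tau> i > perm_complement n \<tau> j}
      = {(i, j). 1 \<le> i \<and> i < j \<and> j \<le> n \<and> \<tau> i < \<tau> j}"
    by (auto simp: compl_less_iff)
  then show ?thesis by (simp add: inv_count_def noninv_count_def)
qed

lemma noninv_count_inv:
  assumes \<tau>: "\<tau> permutes {1..n}"
  shows "noninv_count n (inv \<tau>) = noninv_count n \<tau>"
proof -
  let ?A = "{(i, j). 1 \<le> i \<and> i < j \<and> j \<le> n \<and> \<tau> i < \<tau> j}"
  have image: "{(a, b). 1 \<le> a \<and> a < b \<and> b \<le> n \<and> inv \<tau> a < inv \<tau> b} = map_prod \<tau> \<tau> ` ?A"
  proof (intro equalityI subsetI)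
    fix x assume "x \<in> map_prod \<tau> \<tau> ` ?A"
    then obtain i j where ij: "1 \<le> i" "i < j" "j \<le> n" "\<tau> i < \<tau> j" and x: "x = (\<tau> i, \<tau> j)"
      by auto
    have "\<tau> i \<in> {1..n}" "\<tau> j \<in> {1..n}"
      using ij permutes_in_image[OF \<tau>, of i] permutes_in_image[OF \<tau>, of j] by auto
    then show "x \<in> {(a, b). 1 \<le> a \<and> a < b \<and> b \<le> n \<and> inv \<tau> a < inv \<tau> b}"
      using ij x by (simp add: permutes_inverses(2)[OF \<tau>])
  next
    fix x assume "x \<in> {(a, b). 1 \<le> a \<and> a < b \<and> b \<le> n \<and> inv \<tau> a < inv \<tau> b}"
    then obtain a b where ab: "1 \<le> a" "a < b" "b \<le> n" "inv \<tau> a < inv \<tau> b" and x: "x = (a, b)"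
      by auto
    have "inv \<tau> a \<in> {1..n}" "inv \<tau> b \<in> {1..n}"
      using ab permutes_in_image[OF permutes_inv[OF \<tau>], of a]
        permutes_in_image[OF permutes_inv[OF \<tau>], of b] by auto
    then have "(inv \<tau> a, inv \<tau> b) \<in> ?A" using ab by (simp add: permutes_inverses(1)[OF \<tau>])
    moreover have "x = map_prod \<tau> \<tau> (inv \<tau> a, inv \<tau> b)"
      using x by (simp add: permutes_inverses(1)[OF \<tau>])
    ultimately show "x \<in> map_prod \<tau> \<tau> ` ?A" by blast
  qed
  have "inj_on (map_prod \<tau> \<tau>) ?A"
    using prod.inj_map[OF permutes_inj[OF \<tau>] permutes_inj[OF \<tau>]] by (rule inj_on_subset) simp
  then show ?thesis unfolding noninv_count_def image by (rule card_image)
qed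

lemma noninv_to_inv_inj:
  "noninv_to_inv n T \<Longrightarrow> inj_on T {\<tau>. \<tau> permutes {1..n}}"
  by (simp add: noninv_to_inv_def)

lemma noninv_to_invD:
  assumes "noninv_to_inv n T" "\<tau> permutes {1..n}"
  shows "T \<tau> permutes {1..n}" "inv_count n (T \<tau>) = noninv_count n \<tau>"
  using assms by (simp_all add: noninv_to_inv_def)

lemma noninv_to_invI:
  assumes "\<And>\<tau>. \<tau> permutes {1..n} \<Longrightarrow> T \<tau> permutes {1..n}"
    and "\<And>\<tau>. \<tau> permutes {1..n} \<Longrightarrow> T (T \<tau>) = \<tau>"
    and "\<And>\<tau>. \<tau> permutes {1..n} \<Longrightarrow> inv_count n (T \<tau>) = noninv_count n \<tau>"
  shows "noninv_to_inv n T"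
  unfolding noninv_to_inv_def using assms by (metis inj_on_inverseI mem_Collect_eq)

lemma noninv_to_inv_perm_reverse: "noninv_to_inv n (perm_reverse n)"
proof (rule noninv_to_invI)
  fix \<tau> assume \<tau>: "\<tau> permutes {1..n}"
  show rev: "perm_reverse n \<tau> permutes {1..n}"
    using permutes_compose[OF reversal_permutes \<tau>] by (simp add: perm_reverse_eq[OF \<tau>])
  show "perm_reverse n (perm_reverse n \<tau>) = \<tau>"
    by (subst perm_reverse_eq[OF rev]) (simp add: perm_reverse_eq[OF \<tau>] fun_eq_iff reversal_reversal)
qed (rule inv_count_perm_reverse)

lemma noninv_to_inv_perm_complement: "noninv_to_inv n (perm_complement n)"
proof (rule noninv_to_invI)
  fix \<tau> assume \<tau>: "\<tau> permutes {1..n}"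
  show compl: "perm_complement n \<tau> permutes {1..n}"
    using permutes_compose[OF \<tau> reversal_permutes] by (simp add: perm_complement_eq[OF \<tau>])
  show "perm_complement n (perm_complement n \<tau>) = \<tau>"
    by (subst perm_complement_eq[OF compl])
      (simp add: perm_complement_eq[OF \<tau>] fun_eq_iff reversal_reversal)
  show "inv_count n (perm_complement n \<tau>) = noninv_count n \<tau>"
    by (rule inv_count_perm_complement[OF \<tau>])
qed

lemma noninv_to_inv_inv:
  assumes T: "noninv_to_inv n T"
  shows "noninv_to_inv n (\<lambda>\<tau>. T (inv \<tau>))"
proof -
  have "inj_on inv {\<tau>. \<tau> permutes {1..n}}"
    by (rule inj_on_inverseI[where g = inv]) (simp add: inv_inv_eq permutes_bij)
  then have "inj_on (T \<circ> inv) {\<tau>. \<tau> permutes {1..n}}"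
    using T by (intro comp_inj_on) (auto simp: noninv_to_inv_def permutes_inv
      intro: inj_on_subset)
  then show ?thesis
    using T by (simp add: noninv_to_inv_def comp_def permutes_inv noninv_count_inv)
qed

lemma noninv_to_inv_bij:
  assumes "noninv_to_inv n T"
  shows "bij_betw T {\<tau>. \<tau> permutes {1..n}} {\<tau>. \<tau> permutes {1..n}}"
proof -
  have "T ` {\<tau>. \<tau> permutes {1..n}} \<subseteq> {\<tau>. \<tau> permutes {1..n}}"
    using noninv_to_invD(1)[OF assms] by auto
  then show ?thesis using noninv_to_inv_inj[OF assms]
    by (simp add: bij_betw_def endo_inj_surj finite_permutations)
qed

lemma mallows_Z_eq_q_factorial: "mallows_Z n q = q_factorial n q"
proof -
  let ?T = "perm_complement n"
  have "mallows_Z n q = (\<Sum>\<tau> | \<tau> permutes {1..n}. q ^ inv_count n (?T \<tau>))"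
    unfolding mallows_Z_def
    by (rule sum.reindex_bij_betw[OF noninv_to_inv_bij, symmetric])
      (rule noninv_to_inv_perm_complement)
  also have "\<dots> = (\<Sum>\<tau> | \<tau> permutes {1..n}. q ^ noninv_count n \<tau>)"
    by (intro sum.cong refl) (simp add: inv_count_perm_complement)
  also have "\<dots> = q_factorial n q" by (rule sum_noninv_count_permutations)
  finally show ?thesis .
qed

section \<open>The law of the Mallows process\<close>

locale mallows_process = prob_space M
  for M :: "'a measure" and J :: "nat \<Rightarrow> 'a \<Rightarrow> nat" and q :: real +
  assumes q_pos: "q > 0"
    and J_measurable: "\<And>k. J k \<in> measurable M (count_space UNIV)"
    and J_indep: "indep_vars (\<lambda>_. count_space UNIV) J {1..}"
    and J_distr: "\<And>k j. k \<ge> 1 \<Longrightarrow> prob {\<omega> \<in> space M. J k \<omega> = j} =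
           (if 1 \<le> j \<and> j \<le> k then q ^ (j - 1) / (\<Sum>i<k. q ^ i) else 0)"
begin

lemma J_event_sets: "{\<omega> \<in> space M. J k \<omega> = j} \<in> sets M"
proof -
  have "J k -` {j} \<inter> space M \<in> sets M" by (rule measurable_sets[OF J_measurable]) simp
  moreover have "J k -` {j} \<inter> space M = {\<omega> \<in> space M. J k \<omega> = j}" by auto
  ultimately show ?thesis by simp
qed

lemma J_cylinder_sets: "{\<omega> \<in> space M. \<forall>k\<in>{1..n}. J k \<omega> = u k} \<in> sets M"
  by (intro sets.sets_Collect_finite_All J_event_sets) auto

lemma mallows_perm_event_sets: "{\<omega> \<in> space M. P (mallows_perm (\<lambda>k. J k \<omega>) n)} \<in> sets M"
proof -
  let ?U = "(\<Pi>\<^sub>E k\<in>{1..n}. UNIV) \<inter> {u. P (mallows_perm u n)}"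
  \<comment> \<open>\<open>mallows_perm\<close> only reads the first \<open>n\<close> values, so the event is a countable union of
    cylinders.\<close>
  have "{\<omega> \<in> space M. P (mallows_perm (\<lambda>k. J k \<omega>) n)} =
        (\<Union>u\<in>?U. {\<omega> \<in> space M. \<forall>k\<in>{1..n}. J k \<omega> = u k})"
  proof (intro equalityI subsetI)
    fix \<omega> assume \<omega>: "\<omega> \<in> {\<omega> \<in> space M. P (mallows_perm (\<lambda>k. J k \<omega>) n)}"
    have "mallows_perm (restrict (\<lambda>k. J k \<omega>) {1..n}) n = mallows_perm (\<lambda>k. J k \<omega>) n"
      by (rule mallows_perm_cong) simp
    then show "\<omega> \<in> (\<Union>u\<in>?U. {\<omega> \<in> space M. \<forall>k\<in>{1..n}. J k \<omega> = u k})"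
      using \<omega> by (intro UN_I[of "restrict (\<lambda>k. J k \<omega>) {1..n}"]) auto
  next
    fix \<omega> assume "\<omega> \<in> (\<Union>u\<in>?U. {\<omega> \<in> space M. \<forall>k\<in>{1..n}. J k \<omega> = u k})"
    then obtain u where u: "u \<in> ?U" "\<omega> \<in> space M" "\<forall>k\<in>{1..n}. J k \<omega> = u k" by blast
    then have "mallows_perm (\<lambda>k. J k \<omega>) n = mallows_perm u n" by (intro mallows_perm_cong) auto
    then show "\<omega> \<in> {\<omega> \<in> space M. P (mallows_perm (\<lambda>k. J k \<omega>) n)}" using u by auto
  qed
  moreover have "countable ?U" by (intro countable_Int1 countable_PiE) auto
  ultimately show ?thesis using J_cylinder_sets by (auto intro!: sets.countable_UN')
qed

lemma AE_is_lehmer_code: "AE \<omega> in M. is_lehmer_code n (\<lambda>k. J k \<omega>)"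
  unfolding is_lehmer_code_def
proof (intro AE_finite_allI)
  fix k assume k: "k \<in> {1..n}"
  let ?E = "{\<omega> \<in> space M. J k \<omega> \<in> {1..k}}"
  have "prob ?E = prob (\<Union>j\<in>{1..k}. {\<omega> \<in> space M. J k \<omega> = j})"
    by (rule arg_cong[where f = prob]) auto
  also have "\<dots> = (\<Sum>j\<in>{1..k}. prob {\<omega> \<in> space M. J k \<omega> = j})"
    by (rule finite_measure_finite_Union) (auto simp: disjoint_family_on_def J_event_sets)
  also have "\<dots> = (\<Sum>j\<in>{1..k}. q ^ (j - 1) / (\<Sum>i<k. q ^ i))"
    using k by (intro sum.cong refl) (auto simp: J_distr)
  also have "\<dots> = (\<Sum>j\<in>{1..k}. q ^ (j - 1)) / (\<Sum>i<k. q ^ i)"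
    by (rule sum_divide_distrib[symmetric])
  also have "\<dots> = 1"
  proof -
    have "(\<Sum>i<k. q ^ i) > 0" using k q_pos by (intro sum_pos) (auto simp: lessThan_empty_iff)
    then show ?thesis unfolding sum_shift_geometric by simp
  qed
  finally have "AE \<omega> in M. \<omega> \<in> ?E" by (rule AE_prob_1)
  then show "AE \<omega> in M. J k \<omega> \<in> {1..k}" by eventually_elim simp
qed simp

lemma prob_mallows_perm:
  assumes n: "n \<ge> 1" and \<tau>: "\<tau> permutes {1..n}"
  shows "prob {\<omega> \<in> space M. mallows_perm (\<lambda>k. J k \<omega>) n = \<tau>} = q ^ noninv_count n \<tau> / q_factorial n q"
proof -
  obtain v where v: "v \<in> lehmer_codes n" "mallows_perm v n = \<tau>"
    using \<tau> mallows_perm_lehmer_codes[of n] by (metis (mono_tags) image_iff mem_Collect_eq)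
  have "AE \<omega> in M. mallows_perm (\<lambda>k. J k \<omega>) n = \<tau> \<longleftrightarrow> (\<forall>k\<in>{1..n}. J k \<omega> = v k)"
    using AE_is_lehmer_code[of n]
  proof eventually_elim
    case (elim \<omega>)
    show ?case
    proof
      assume "mallows_perm (\<lambda>k. J k \<omega>) n = \<tau>"
      then show "\<forall>k\<in>{1..n}. J k \<omega> = v k"
        using mallows_perm_eq_imp_code_eq[OF elim lehmer_codes_is_lehmer_code[OF v(1)]] v(2) by simp
    next
      assume "\<forall>k\<in>{1..n}. J k \<omega> = v k"
      then have "mallows_perm (\<lambda>k. J k \<omega>) n = mallows_perm v n" by (intro mallows_perm_cong) simp
      then show "mallows_perm (\<lambda>k. J k \<omega>) n = \<tau>" using v(2) by simp
    qed
  qed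
  then have "prob {\<omega> \<in> space M. mallows_perm (\<lambda>k. J k \<omega>) n = \<tau>} =
             prob {\<omega> \<in> space M. \<forall>k\<in>{1..n}. J k \<omega> = v k}"
    by (rule prob_eq_AE[OF _ mallows_perm_event_sets J_cylinder_sets])
  also have "{\<omega> \<in> space M. \<forall>k\<in>{1..n}. J k \<omega> = v k} = (\<Inter>k\<in>{1..n}. J k -` {v k} \<inter> space M)"
    using n by auto
  also have "prob \<dots> = (\<Prod>k\<in>{1..n}. prob (J k -` {v k} \<inter> space M))"
    using n by (intro indep_varsD[OF J_indep]) auto
  also have "\<dots> = (\<Prod>k\<in>{1..n}. q ^ (v k - 1) / (\<Sum>i<k. q ^ i))"
  proof (rule prod.cong[OF refl])
    fix k assume k: "k \<in> {1..n}"
    have "J k -` {v k} \<inter> space M = {\<omega> \<in> space M. J k \<omega> = v k}" by auto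
    then show "prob (J k -` {v k} \<inter> space M) = q ^ (v k - 1) / (\<Sum>i<k. q ^ i)"
      using J_distr[of k "v k"] k v(1) by (auto simp: PiE_iff)
  qed
  also have "\<dots> = q ^ noninv_count n \<tau> / q_factorial n q"
    using noninv_count_mallows_perm[OF lehmer_codes_is_lehmer_code[OF v(1)]]
    by (simp add: v(2) prod_dividef power_sum q_factorial_def)
  finally show ?thesis .
qed

lemma prob_transformed_mallows_perm:
  assumes n: "n \<ge> 1" and T: "noninv_to_inv n T" and \<sigma>: "\<sigma> permutes {1..n}"
  shows "prob {\<omega> \<in> space M. T (mallows_perm (\<lambda>k. J k \<omega>) n) = \<sigma>} = mallows_mu n q \<sigma>"
proof -
  have "\<sigma> \<in> T ` {\<tau>. \<tau> permutes {1..n}}"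
    using noninv_to_inv_bij[OF T] \<sigma> by (simp add: bij_betw_def)
  then obtain \<tau> where \<tau>: "\<tau> permutes {1..n}" "T \<tau> = \<sigma>" by auto
  have "AE \<omega> in M. T (mallows_perm (\<lambda>k. J k \<omega>) n) = \<sigma> \<longleftrightarrow> mallows_perm (\<lambda>k. J k \<omega>) n = \<tau>"
    using AE_is_lehmer_code[of n]
  proof eventually_elim
    case (elim \<omega>)
    then have "mallows_perm (\<lambda>k. J k \<omega>) n permutes {1..n}" by (rule mallows_perm_permutes)
    then have "T (mallows_perm (\<lambda>k. J k \<omega>) n) = T \<tau> \<longleftrightarrow> mallows_perm (\<lambda>k. J k \<omega>) n = \<tau>"
      using \<tau>(1) by (intro inj_on_eq_iff[OF noninv_to_inv_inj[OF T]]) simp_all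
    then show ?case using \<tau>(2) by simp
  qed
  then have "prob {\<omega> \<in> space M. T (mallows_perm (\<lambda>k. J k \<omega>) n) = \<sigma>} =
             prob {\<omega> \<in> space M. mallows_perm (\<lambda>k. J k \<omega>) n = \<tau>}"
    by (rule prob_eq_AE[OF _ mallows_perm_event_sets mallows_perm_event_sets])
  also have "\<dots> = q ^ noninv_count n \<tau> / q_factorial n q" by (rule prob_mallows_perm[OF n \<tau>(1)])
  also have "\<dots> = q ^ inv_count n \<sigma> / mallows_Z n q"
    using noninv_to_invD(2)[OF T \<tau>(1)] \<tau>(2) by (simp add: mallows_Z_eq_q_factorial)
  finally show ?thesis by (simp add: mallows_mu_def)
qed

end

theorem corollary2p3:
  fixes M :: "'a measure" and J :: "nat \<Rightarrow> 'a \<Rightarrow> nat" and q :: real and n :: nat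
  assumes "prob_space M"
    and "q > 0" and "n \<ge> 1"
    and "\<And>k. J k \<in> measurable M (count_space UNIV)"
    and "prob_space.indep_vars M (\<lambda>_. count_space UNIV) J {1..}"
    and "\<And>k j. k \<ge> 1 \<Longrightarrow> measure M {\<omega> \<in> space M. J k \<omega> = j} =
           (if 1 \<le> j \<and> j \<le> k then q ^ (j - 1) / (\<Sum>i<k. q ^ i) else 0)"
  defines "p \<equiv> \<lambda>\<omega>. mallows_perm (\<lambda>k. J k \<omega>) n"
  shows "\<forall>\<pi> \<in> {(\<lambda>\<omega> i. if i \<in> {1..n} then p \<omega> (n + 1 - i) else i),
               (\<lambda>\<omega> i. if i \<in> {1..n} then n + 1 - inv (p \<omega>) i else i),
               (\<lambda>\<omega> i. if i \<in> {1..n} then inv (p \<omega>) (n + 1 - i) else i),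
               (\<lambda>\<omega> i. if i \<in> {1..n} then n + 1 - p \<omega> i else i)}.
           \<forall>\<sigma>. \<sigma> permutes {1..n} \<longrightarrow>
             measure M {\<omega> \<in> space M. \<pi> \<omega> = \<sigma>} = mallows_mu n q \<sigma>"
proof -
  interpret mallows_process M J q
    using assms(1,2,4-6) by (simp add: mallows_process_def mallows_process_axioms_def)
  have law: "\<forall>\<sigma>. \<sigma> permutes {1..n} \<longrightarrow> measure M {\<omega> \<in> space M. T (p \<omega>) = \<sigma>} = mallows_mu n q \<sigma>"
    if "noninv_to_inv n T" for T
    unfolding p_def using prob_transformed_mallows_perm[OF assms(3) that] by blast
  show ?thesis
    using law[OF noninv_to_inv_perm_reverse]
      law[OF noninv_to_inv_inv[OF noninv_to_inv_perm_complement]]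
      law[OF noninv_to_inv_inv[OF noninv_to_inv_perm_reverse]]
      law[OF noninv_to_inv_perm_complement]
    by (simp add: perm_reverse_def perm_complement_def)
qed

end
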